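(* Let $k$ be a Brauer field and let $K/k$ be a field extension such that the group $K^{\times}/(k^{\times}\cdot(K^{\times})^d)$ is finite for all $d\ge 1$. Then $K$ is a Brauer field.
   Context: A field $k$ is a Brauer field if for every $d\ge 1$ there is a number $N_k(d)$ such that every equation $a_1x_1^d+\cdots+a_nx_n^d=0$ with $n>N_k(d)$ and $a_i\in k$ has a non-trivial solution in $k^n$. *)

theory Defs
  imports Main
begin

definition is_subfield :: "'a::field set \<Rightarrow> bool" where
  "is_subfield k \<longleftrightarrow> 0 \<in> k \<and> 1 \<in> k \<and>
     (\<forall>x\<in>k. \<forall>y\<in>k. x + y \<in> k \<and> x * y \<in> k) \<and>
     (\<forall>x\<in>k. - x \<in> k) \<and> (\<forall>x\<in>k. x \<noteq> 0 \<longrightarrow> inverse x \<in> k)"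

definition brauer_field :: "'a::field set \<Rightarrow> bool" where
  "brauer_field k \<longleftrightarrow> (\<forall>d::nat. d \<ge> 1 \<longrightarrow> (\<exists>N::nat. \<forall>n > N. \<forall>a :: nat \<Rightarrow> 'a.
      (\<forall>i<n. a i \<in> k) \<longrightarrow>
      (\<exists>x :: nat \<Rightarrow> 'a. (\<forall>i<n. x i \<in> k) \<and> (\<exists>i<n. x i \<noteq> 0) \<and>
                         (\<Sum>i<n. a i * x i ^ d) = 0)))"

text \<open>The subgroup k^* . (K^* )^d of K^*, for k a subfield of K = UNIV.\<close>
definition norm_subgroup :: "'a::field set \<Rightarrow> nat \<Rightarrow> 'a set" where
  "norm_subgroup k d = {a * y ^ d | a y. a \<in> k \<and> a \<noteq> 0 \<and> y \<noteq> 0}"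

definition quotient_cosets :: "'a::field set \<Rightarrow> nat \<Rightarrow> 'a set set" where
  "quotient_cosets k d = (\<lambda>x. (\<lambda>h. x * h) ` norm_subgroup k d) ` (UNIV - {0})"

end

theory Submission
  imports Defs
begin

text \<open>Split the variables of a diagonal form over K according to the class of their coefficient
  in the finite group K^*/(k^* (K^* )^d). With more than m N variables, where m is the order of
  that group and N the Brauer bound of k for degree d, some class contains more than N of them.
  Within one class the coefficients have the form b c_i y_i^d with c_i in k, so the substitution
  x_i = z_i / y_i turns the subform into b times a diagonal form over k in more than N variables,
  which has a non-trivial zero in k; all other variables are set to 0.\<close>

definition is_diagonal_zero :: "'a::field set \<Rightarrow> nat \<Rightarrow> 'i set \<Rightarrow> ('i \<Rightarrow> 'a) \<Rightarrow> ('i \<Rightarrow> 'a) \<Rightarrow> bool"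
  where "is_diagonal_zero k d I a x \<longleftrightarrow>
    (\<forall>i\<in>I. x i \<in> k) \<and> (\<exists>i\<in>I. x i \<noteq> 0) \<and> (\<Sum>i\<in>I. a i * x i ^ d) = 0"

lemma brauer_field_iff:
  "brauer_field k \<longleftrightarrow> (\<forall>d\<ge>1. \<exists>N. \<forall>n::nat>N. \<forall>a. (\<forall>i<n. a i \<in> k) \<longrightarrow>
     (\<exists>x. is_diagonal_zero k d {..<n} a x))"
  by (simp add: brauer_field_def is_diagonal_zero_def Ball_def Bex_def)

lemma is_diagonal_zero_reindex:
  assumes g: "bij_betw g J I" and z: "is_diagonal_zero k d J (a \<circ> g) z"
  shows "is_diagonal_zero k d I a (z \<circ> inv_into J g)"
proof -
  have zg: "(z \<circ> inv_into J g) (g j) = z j" if "j \<in> J" for j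
    using g that by (simp add: bij_betw_inv_into_left)
  have "(\<Sum>i\<in>I. a i * (z \<circ> inv_into J g) i ^ d) = (\<Sum>j\<in>J. a (g j) * z j ^ d)"
    by (simp add: sum.reindex_bij_betw[OF g, symmetric] bij_betw_inv_into_left[OF g] cong: sum.cong)
  with z zg bij_betw_imp_surj_on[OF g] show ?thesis
    unfolding is_diagonal_zero_def by auto
qed

lemma brauer_field_finite_indexD:
  assumes "brauer_field k" "d \<ge> 1"
  obtains N where "\<And>I a. finite I \<Longrightarrow> N < card I \<Longrightarrow> (\<forall>i\<in>I. a i \<in> k) \<Longrightarrow>
    \<exists>x. is_diagonal_zero k d I a x"
proof -
  obtain N :: nat where N: "\<And>n a. N < n \<Longrightarrow> (\<forall>i<n. a i \<in> k) \<Longrightarrow>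
      \<exists>x. is_diagonal_zero k d {..<n} a x"
    using assms unfolding brauer_field_iff by meson
  have "\<exists>x. is_diagonal_zero k d I a x"
    if I: "finite I" "N < card I" "\<forall>i\<in>I. a i \<in> k" for I and a :: "'b \<Rightarrow> 'a"
  proof -
    obtain g where g: "bij_betw g {..<card I} I"
      using ex_bij_betw_nat_finite[OF \<open>finite I\<close>] atLeast0LessThan by auto
    then obtain z where "is_diagonal_zero k d {..<card I} (a \<circ> g) z"
      using N[of "card I" "a \<circ> g"] I bij_betwE by fastforce
    with g show ?thesis
      by (blast intro: is_diagonal_zero_reindex)
  qed
  then show thesis
    by (rule that)
qed

lemma is_diagonal_zero_extend:
  assumes "is_diagonal_zero k d J a x" "J \<subseteq> I" "finite I" "0 \<in> k" "d \<ge> 1"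
  shows "is_diagonal_zero k d I a (\<lambda>i. if i \<in> J then x i else 0)"
proof -
  have "(\<Sum>i\<in>I. a i * (if i \<in> J then x i else 0) ^ d) = (\<Sum>i\<in>J. a i * x i ^ d)"
    using assms(2-5) by (intro sum.mono_neutral_cong_right) auto
  with assms show ?thesis
    unfolding is_diagonal_zero_def by auto
qed

lemma is_diagonal_zero_rescale:
  assumes "is_diagonal_zero k d I c z" and "\<forall>i\<in>I. y i \<noteq> 0 \<and> a i = b * (c i * y i ^ d)"
    and "b \<noteq> 0"
  shows "is_diagonal_zero UNIV d I a (\<lambda>i. z i / y i)"
proof -
  have "(\<Sum>i\<in>I. a i * (z i / y i) ^ d) = b * (\<Sum>i\<in>I. c i * z i ^ d)"
    using assms(2) by (simp add: sum_distrib_left power_divide field_simps cong: sum.cong)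
  with assms show ?thesis
    unfolding is_diagonal_zero_def by auto
qed

lemma pigeonhole_large_fiber:
  assumes "finite A" "card (f ` A) \<le> m" "m * N < card A"
  obtains b where "b \<in> f ` A" "N < card {i\<in>A. f i = b}"
proof -
  have "\<exists>b\<in>f ` A. N < card {i\<in>A. f i = b}"
  proof (rule ccontr)
    assume "\<not> ?thesis"
    then have small: "\<And>b. b \<in> f ` A \<Longrightarrow> card {i\<in>A. f i = b} \<le> N"
      by (auto simp: not_less)
    have "A = (\<Union>b\<in>f ` A. {i\<in>A. f i = b})"
      by auto
    then have "card A \<le> (\<Sum>b\<in>f ` A. card {i\<in>A. f i = b})"
      by (metis card_UN_le finite_imageI \<open>finite A\<close>)
    also have "\<dots> \<le> card (f ` A) * N"
      using sum_bounded_above[of "f ` A" _ N] small by auto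
    also have "\<dots> \<le> m * N"
      using assms(2) by simp
    finally show False
      using assms(3) by simp
  qed
  then show thesis
    using that by blast
qed

lemma one_mem_norm_subgroup: "1 \<in> k \<Longrightarrow> 1 \<in> norm_subgroup k d"
  unfolding norm_subgroup_def by (intro CollectI exI[of _ 1]) simp

lemma mem_norm_coset_iff:
  "v \<in> (\<lambda>h. u * h) ` norm_subgroup k d \<longleftrightarrow>
    (\<exists>c y. c \<in> k \<and> c \<noteq> 0 \<and> y \<noteq> 0 \<and> v = u * (c * y ^ d))"
  unfolding norm_subgroup_def by auto

lemma obtain_large_norm_class:
  assumes "1 \<in> k" "finite (quotient_cosets k d)" "finite I"
    and "card (quotient_cosets k d) * N < card I" "\<forall>i\<in>I. a i \<noteq> 0"
  obtains S b c y where "S \<subseteq> I" "N < card S" "b \<noteq> 0"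
    "\<forall>i\<in>S. c i \<in> k \<and> y i \<noteq> 0 \<and> a i = b * (c i * y i ^ d)"
proof -
  define coset where "coset i = (\<lambda>h. a i * h) ` norm_subgroup k d" for i
  have "coset ` I \<subseteq> quotient_cosets k d"
    using assms(5) unfolding coset_def quotient_cosets_def by auto
  then have "card (coset ` I) \<le> card (quotient_cosets k d)"
    using assms(2) by (rule card_mono[rotated])
  then obtain B where "B \<in> coset ` I" and large: "N < card {i\<in>I. coset i = B}"
    by (rule pigeonhole_large_fiber[OF assms(3) _ assms(4)])
  then obtain i0 where i0: "i0 \<in> I" "coset i0 = B"
    by blast
  define S where "S = {i\<in>I. coset i = B}"
  have "\<exists>c y. c \<in> k \<and> y \<noteq> 0 \<and> a i = a i0 * (c * y ^ d)" if "i \<in> S" for i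
  proof -
    have "a i \<in> coset i"
      unfolding coset_def using one_mem_norm_subgroup[OF assms(1)] by force
    also have "coset i = coset i0"
      using that i0 unfolding S_def by simp
    finally show ?thesis
      unfolding coset_def mem_norm_coset_iff by blast
  qed
  then obtain c y where "\<forall>i\<in>S. c i \<in> k \<and> y i \<noteq> 0 \<and> a i = a i0 * (c i * y i ^ d)"
    by (metis (no_types))
  moreover have "S \<subseteq> I" "N < card S" "a i0 \<noteq> 0"
    using large i0 assms(5) unfolding S_def by auto
  ultimately show thesis
    by (intro that)
qed

theorem proposition2p4:
  fixes k :: "'a::field set"
  assumes "is_subfield k"
    and "brauer_field k"
    and "\<And>d::nat. d \<ge> 1 \<Longrightarrow> finite (quotient_cosets k d)"
  shows "brauer_field (UNIV :: 'a set)"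
  unfolding brauer_field_iff
proof (intro allI impI)
  fix d :: nat
  assume d: "d \<ge> 1"
  have "1 \<in> k"
    using assms(1) unfolding is_subfield_def by simp
  obtain N where N: "\<And>(I :: nat set) c. finite I \<Longrightarrow> N < card I \<Longrightarrow> (\<forall>i\<in>I. c i \<in> k) \<Longrightarrow>
      \<exists>z. is_diagonal_zero k d I c z"
    using brauer_field_finite_indexD[OF assms(2) d] by metis
  show "\<exists>M. \<forall>n::nat>M. \<forall>a. (\<forall>i<n. a i \<in> UNIV) \<longrightarrow>
    (\<exists>x. is_diagonal_zero (UNIV :: 'a set) d {..<n} a x)"
  proof (intro exI[of _ "card (quotient_cosets k d) * N"] allI impI)
    fix n and a :: "nat \<Rightarrow> 'a"
    assume n: "card (quotient_cosets k d) * N < n"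
    show "\<exists>x. is_diagonal_zero UNIV d {..<n} a x"
    proof (cases "\<exists>i<n. a i = 0")
      case True
      then obtain i where "i < n" "a i = 0"
        by blast
      then have "is_diagonal_zero UNIV d {..<n} a (\<lambda>j. if j = i then 1 else 0)"
        using d unfolding is_diagonal_zero_def by (auto intro: sum.neutral)
      then show ?thesis
        by blast
    next
      case False
      obtain S b c y where S: "S \<subseteq> {..<n}" "N < card S" "b \<noteq> 0"
        and cy: "\<forall>i\<in>S. c i \<in> k \<and> y i \<noteq> 0 \<and> a i = b * (c i * y i ^ d)"
        by (rule obtain_large_norm_class[OF \<open>1 \<in> k\<close> assms(3)[OF d], of "{..<n}" N a])
          (use n False in auto)
      then obtain z where "is_diagonal_zero k d S c z"
        using N[of S c] finite_subset by blast
      then have "is_diagonal_zero UNIV d S a (\<lambda>i. z i / y i)"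
        using cy S(3) by (blast intro: is_diagonal_zero_rescale)
      then show ?thesis
        using S(1) d by (blast dest: is_diagonal_zero_extend)
    qed
  qed
qed

end
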